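(* Let $n,T,p\ge 1$, let $\alpha\in(0,\tfrac12)$, $\pi>1$, $c>0$, and let $\bar c\ge \underline{c}>0$ and $c_m>0$ be constants. Suppose the covariate vectors $X^{zt}\in[0,1]^p$ ($z\in[n]$, $t\in[T]$) satisfy the following coverage condition: for every pair $x^{(1)}\le x^{(2)}$ in $[0,1]^p$ (componentwise), with $V:=\prod_{j=1}^p (x^{(2)}_j-x^{(1)}_j)$ and $M:=\sqrt{\frac{\ln(nT)(p+1)}{\min(n,T)}}$, $$\underline{c}\,V-c_mM\;\le\;\frac{\#\{(z,t): x^{(1)}\le X^{zt}\le x^{(2)}\}}{nT}\;\le\;\bar c\,V+c_mM .$$ Let $\mathbb T$ be an $\alpha$-regular, fair-split regression tree (with parameter $\pi$) on the $nT$ observations, with $\ell$ leaves, each of depth at least $c\log \ell$, and suppose $\ell\le \left(\frac{\alpha}{2c_mM}\right)^{\frac{1}{c\log(1/\alpha)}}$. Let $\mathcal T_1^\star,\dots,\mathcal T_q^\star:[0,1]^p\to\mathbb R$ be Lipschitz functions, $\mathcal T_i^\star$ having Lipschitz constant $L_i$. Then for each $i\in[q]$ and each leaf of $\mathbb T$, letting $C$ be the set of observations in that leaf, $$\max_{(z_1,t_1),(z_2,t_2)\in C}\left|\mathcal T_i^\star(X^{z_1t_1})-\mathcal T_i^\star(X^{z_2t_2})\right|\le \frac{2L_i\sqrt p}{\ell^{s}},\qquad s:=\frac{c}{(\pi+1)p}\cdot\frac{\alpha\,\underline{c}}{4\bar c}.$$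
   Context: Panel data: $n$ units observed over $T$ time periods; observation $(z,t)$ has covariate vector $X^{zt}=(X_{1zt},\dots,X_{pzt})\in[0,1]^p$. There are $q$ treatments encoded by binary matrices $W_1,\dots,W_q\in\{0,1\}^{n\times T}$ (entry $(z,t)$ is 1 if observation $(z,t)$ receives the treatment); $\mathcal T_i^\star(X^{zt})$ is the effect of treatment $i$ on observation $(z,t)$. A regression tree here is a binary tree whose root contains all $nT$ observations and each internal node splits its set of observations into two children by comparing a single covariate $j$ to a threshold $x$ (observations with $X_{jzt}\le x$ versus $X_{jzt}>x$); the leaves partition the observations into clusters. The tree is $\alpha$-regular if every split sends at least a fraction $\alpha$ of the node's observations to each child, and each child contains at least one treated observation. The tree is a fair-split tree (with parameter $\pi>1$) if, for any node, whenever a covariate $j$ has not been used in the splits of its last $\pi p$ ancestor nodes, the next split at that node must use covariate $j$ (ties between several such covariates broken arbitrarily). Lipschitz is with respect to the Euclidean norm. *)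

theory Defs
  imports "HOL-Analysis.Analysis"
begin

text \<open>Observations are pairs (z,t). Covariate vectors live in real^'p, so p = CARD('p)
  and the norm is the Euclidean one.\<close>

type_synonym obs = "nat \<times> nat"

text \<open>A regression tree: a leaf, or a split on covariate j at threshold x
  (left child: X_j \<le> x, right child: X_j > x).\<close>
datatype 'p rtree = Leaf | Node 'p real "'p rtree" "'p rtree"

fun num_leaves :: "'p rtree \<Rightarrow> nat" where
  "num_leaves Leaf = 1"
| "num_leaves (Node j x l r) = num_leaves l + num_leaves r"

fun leaf_clusters ::
  "(obs \<Rightarrow> real^'p) \<Rightarrow> 'p rtree \<Rightarrow> obs set \<Rightarrow> nat \<Rightarrow> (obs set \<times> nat) set" where
  "leaf_clusters X Leaf S d = {(S, d)}"
| "leaf_clusters X (Node j x l r) S d =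
     leaf_clusters X l {w \<in> S. X w $ j \<le> x} (Suc d) \<union>
     leaf_clusters X r {w \<in> S. X w $ j > x} (Suc d)"

text \<open>\<alpha>-regularity: every split sends at least a fraction \<alpha> of the node's observations
  to each child, and each child contains, for every treatment i < q, an observation
  receiving treatment i.\<close>
fun alpha_regular ::
  "(obs \<Rightarrow> real^'p) \<Rightarrow> (nat \<Rightarrow> obs \<Rightarrow> bool) \<Rightarrow> nat \<Rightarrow> real \<Rightarrow> 'p rtree \<Rightarrow> obs set \<Rightarrow> bool" where
  "alpha_regular X W q \<alpha> Leaf S = True"
| "alpha_regular X W q \<alpha> (Node j x l r) S =
     (let SL = {w \<in> S. X w $ j \<le> x}; SR = {w \<in> S. X w $ j > x} in
        \<alpha> * real (card S) \<le> real (card SL) \<and> \<alpha> * real (card S) \<le> real (card SR) \<and>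
        (\<forall>i<q. \<exists>w\<in>SL. W i w) \<and> (\<forall>i<q. \<exists>w\<in>SR. W i w) \<and>
        alpha_regular X W q \<alpha> l SL \<and> alpha_regular X W q \<alpha> r SR)"

text \<open>Fair-split condition with window m (= number of most recent ancestors considered).
  hist lists the covariates used by the ancestors, most recent first.\<close>
fun fair_split_aux :: "nat \<Rightarrow> 'p rtree \<Rightarrow> 'p list \<Rightarrow> bool" where
  "fair_split_aux m Leaf hist = True"
| "fair_split_aux m (Node j x l r) hist =
     (((\<exists>k. k \<notin> set (take m hist)) \<longrightarrow> j \<notin> set (take m hist)) \<and>
      fair_split_aux m l (j # hist) \<and> fair_split_aux m r (j # hist))"

definition fair_split :: "real \<Rightarrow> 'p::finite rtree \<Rightarrow> bool" where
  "fair_split \<pi> tr = fair_split_aux (nat \<lfloor>\<pi> * real CARD('p)\<rfloor>) tr []"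

definition unit_cube :: "(real^'p) set" where
  "unit_cube = {x. \<forall>j. 0 \<le> x $ j \<and> x $ j \<le> 1}"

end

theory Submission
  imports Defs
begin

(* Every node of the tree is box-closed: it contains all observations lying in its bounding box.
   When a node S at depth k is split on covariate j, each child keeps an alpha-fraction of S, so
   S holds at least alpha^k n T observations.  Below depth c ln l this dominates the sampling
   error c_m M (that is what the bound on the number l of leaves buys), and the coverage
   condition, applied to the bounding box of S and to the slab of that box spanned by a child,
   shows that each child spans at least the fraction delta = alpha cund / (4 cbar) of the
   j-width of S.  As the children are separated by the threshold, each of them has j-width at
   most (1 - delta) times that of S.  Fair splitting makes every covariate occur in every
   window of (pi + 1) p consecutive ancestors, so on the first c ln l levels every side of a
   leaf's box shrinks at least c ln l / ((pi + 1) p) - 1 times.  Hence every side is at most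
   2 l^(-s), the diameter at most 2 sqrt p l^(-s), and Lipschitz continuity concludes. *)

(* The condition of fair_split_aux along a root-to-node path, whose covariates are listed most
   recent first. *)
fun fair_history :: "nat \<Rightarrow> 'p list \<Rightarrow> bool" where
  "fair_history m [] = True"
| "fair_history m (j # h) =
     (((\<exists>k. k \<notin> set (take m h)) \<longrightarrow> j \<notin> set (take m h)) \<and> fair_history m h)"

lemma fair_history_drop: "fair_history m h \<Longrightarrow> fair_history m (drop i h)"
  by (induction h arbitrary: i) (auto simp: drop_Cons split: nat.split)

lemma fair_history_nth:
  assumes "fair_history m h" "i < length h" "k \<notin> set (take m (drop (Suc i) h))"
  shows "h ! i \<notin> set (take m (drop (Suc i) h))"
proof -
  have "drop i h = h ! i # drop (Suc i) h"
    using assms(2) by (simp add: Cons_nth_drop_Suc)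
  with fair_history_drop[OF assms(1), of i] assms(3) show ?thesis
    by (metis fair_history.simps(2))
qed

lemma fair_history_window:
  fixes h :: "'p::finite list"
  assumes fair: "fair_history m h" and m: "CARD('p) \<le> m" and len: "m + CARD('p) \<le> length h"
  shows "j \<in> set (take (m + CARD('p)) h)"
proof (rule ccontr)
  let ?P = "CARD('p)"
  assume j: "j \<notin> set (take (m + ?P) h)"
  \<comment> \<open>then the first CARD('p) entries are pairwise distinct and all differ from j\<close>
  have fresh: "h ! a \<noteq> h ! b" if "a < b" "b < ?P" for a b
  proof -
    have "set (take m (drop (Suc a) h)) \<subseteq> set (take (m + ?P) h)"
      using that set_drop_subset set_take_subset_set_take[of "Suc (m + a)" "m + ?P" h]
      by (fastforce simp: take_drop)
    then have "h ! a \<notin> set (take m (drop (Suc a) h))"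
      using fair_history_nth[OF fair, of a j] j that len by auto
    moreover have "h ! b \<in> set (take m (drop (Suc a) h))"
      using that m len by (auto simp: in_set_conv_nth intro!: exI[of _ "b - Suc a"])
    ultimately show ?thesis by metis
  qed
  have "distinct (take ?P h)"
    unfolding distinct_conv_nth using len
    by (auto elim!: linorder_neqE_nat dest: fresh simp: nth_take)
  then have "?P = card (set (take ?P h))"
    using len by (simp add: distinct_card)
  also have "\<dots> \<le> card (UNIV - {j})"
    using j set_take_subset_set_take[of ?P "m + ?P" h] by (intro card_mono) auto
  also have "\<dots> < ?P"
    by (simp add: card_Diff_singleton)
  finally show False by simp
qed

lemma fair_history_count:
  fixes h :: "'p::finite list"
  assumes "fair_history m h" "CARD('p) \<le> m"
  shows "length h div (m + CARD('p)) \<le> count_list h j"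
  using assms
proof (induction "length h" arbitrary: h rule: less_induct)
  case less
  let ?B = "m + CARD('p)"
  show ?case
  proof (cases "length h < ?B")
    case True
    then show ?thesis by simp
  next
    case False
    have "j \<in> set (take ?B h)"
      using fair_history_window[OF less.prems] False by simp
    then have head: "1 \<le> count_list (take ?B h) j"
      by (metis count_list_0_iff less_one not_le)
    have "0 < CARD('p)"
      by simp
    then have "length (drop ?B h) < length h"
      using False by (simp only: length_drop)
    then have tail: "length (drop ?B h) div ?B \<le> count_list (drop ?B h) j"
      using less.hyps less.prems(2) fair_history_drop[OF less.prems(1)] by blast
    have "length h div ?B = Suc (length (drop ?B h) div ?B)"
      using False by (simp add: le_div_geq)
    moreover have "count_list h j = count_list (take ?B h) j + count_list (drop ?B h) j"
      by (metis append_take_drop_id count_list_append)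
    ultimately show ?thesis using head tail by linarith
  qed
qed

lemma leaf_clusters_invariant:
  assumes "fair_split_aux m t h" "alpha_regular X W q \<alpha> t S" "Inv S h" "fair_history m h"
    and step: "\<And>S h j x. Inv S h \<Longrightarrow>
        \<alpha> * real (card S) \<le> real (card {w\<in>S. X w $ j \<le> x}) \<Longrightarrow>
        \<alpha> * real (card S) \<le> real (card {w\<in>S. X w $ j > x}) \<Longrightarrow>
        Inv {w\<in>S. X w $ j \<le> x} (j # h) \<and> Inv {w\<in>S. X w $ j > x} (j # h)"
    and "(C, d) \<in> leaf_clusters X t S (length h)"
  shows "\<exists>h'. length h' = d \<and> Inv C h' \<and> fair_history m h'"
  using assms(1-4,6)
proof (induction t arbitrary: S h)
  case Leaf
  then show ?case by auto
next
  case (Node j x l r)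
  let ?SL = "{w\<in>S. X w $ j \<le> x}" and ?SR = "{w\<in>S. X w $ j > x}"
  have children: "Inv ?SL (j # h)" "Inv ?SR (j # h)"
    using Node.prems(2,3) step by (auto simp: Let_def)
  from Node.prems(5) consider
      "(C, d) \<in> leaf_clusters X l ?SL (length (j # h))"
    | "(C, d) \<in> leaf_clusters X r ?SR (length (j # h))"
    by auto
  then show ?case
  proof cases
    case 1
    then show ?thesis
      using Node.IH(1)[of "j # h" ?SL] Node.prems children by (auto simp: Let_def)
  next
    case 2
    then show ?thesis
      using Node.IH(2)[of "j # h" ?SR] Node.prems children by (auto simp: Let_def)
  qed
qed

lemma leaf_clusters_subset: "(C, d) \<in> leaf_clusters X t S d0 \<Longrightarrow> C \<subseteq> S"
  by (induction t arbitrary: S d0) fastforce+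

lemma num_leaves_pos: "1 \<le> num_leaves t"
  by (induction t) auto

definition box_lo :: "(obs \<Rightarrow> real^'p) \<Rightarrow> obs set \<Rightarrow> 'p \<Rightarrow> real" where
  "box_lo X S i = Min ((\<lambda>w. X w $ i) ` S)"

definition box_hi :: "(obs \<Rightarrow> real^'p) \<Rightarrow> obs set \<Rightarrow> 'p \<Rightarrow> real" where
  "box_hi X S i = Max ((\<lambda>w. X w $ i) ` S)"

definition box_width :: "(obs \<Rightarrow> real^'p) \<Rightarrow> obs set \<Rightarrow> 'p \<Rightarrow> real" where
  "box_width X S i = box_hi X S i - box_lo X S i"

lemma box_lo_le: "finite S \<Longrightarrow> w \<in> S \<Longrightarrow> box_lo X S i \<le> X w $ i"
  unfolding box_lo_def by simp

lemma box_hi_ge: "finite S \<Longrightarrow> w \<in> S \<Longrightarrow> X w $ i \<le> box_hi X S i"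
  unfolding box_hi_def by simp

lemma box_lo_attained: "finite S \<Longrightarrow> S \<noteq> {} \<Longrightarrow> \<exists>w\<in>S. box_lo X S i = X w $ i"
  unfolding box_lo_def by (metis (no_types, lifting) Min_in finite_imageI image_iff image_is_empty)

lemma box_hi_attained: "finite S \<Longrightarrow> S \<noteq> {} \<Longrightarrow> \<exists>w\<in>S. box_hi X S i = X w $ i"
  unfolding box_hi_def by (metis (no_types, lifting) Max_in finite_imageI image_iff image_is_empty)

lemma box_lo_antimono:
  "finite S \<Longrightarrow> A \<subseteq> S \<Longrightarrow> A \<noteq> {} \<Longrightarrow> box_lo X S i \<le> box_lo X A i"
  unfolding box_lo_def by (rule Min_antimono) auto

lemma box_hi_mono:
  "finite S \<Longrightarrow> A \<subseteq> S \<Longrightarrow> A \<noteq> {} \<Longrightarrow> box_hi X A i \<le> box_hi X S i"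
  unfolding box_hi_def by (rule Max_mono) auto

lemma box_width_mono:
  "finite S \<Longrightarrow> A \<subseteq> S \<Longrightarrow> A \<noteq> {} \<Longrightarrow> box_width X A i \<le> box_width X S i"
  using box_lo_antimono[of S A X i] box_hi_mono[of S A X i] by (simp add: box_width_def)

lemma component_dist_le_box_width:
  "finite S \<Longrightarrow> a \<in> S \<Longrightarrow> b \<in> S \<Longrightarrow> \<bar>X a $ i - X b $ i\<bar> \<le> box_width X S i"
  using box_lo_le[of S a X i] box_hi_ge[of S a X i] box_lo_le[of S b X i] box_hi_ge[of S b X i]
  unfolding box_width_def abs_le_iff by linarith

lemma slab_volume_ratio:
  fixes \<alpha> cund cbar \<sigma> slack w w' Q :: real
  assumes "0 < \<alpha>" "\<alpha> \<le> 1/2" "0 < cund" "cund \<le> cbar" "0 < \<sigma>" "0 \<le> Q"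
    and large: "slack \<le> \<alpha> * \<sigma> / 2"
    and slab: "\<alpha> * \<sigma> \<le> cbar * (w' * Q) + slack"
    and cell: "cund * (w * Q) - slack \<le> \<sigma>"
  shows "\<alpha> * cund / (4 * cbar) * w \<le> w'"
proof -
  have cbar: "0 < cbar"
    using assms by linarith
  have slab': "\<alpha> * \<sigma> / 2 \<le> cbar * (w' * Q)"
    using slab large by linarith
  moreover have "0 < \<alpha> * \<sigma> / 2"
    using assms by simp
  ultimately have "0 < Q"
    using \<open>0 \<le> Q\<close> by (cases "Q = 0") auto
  have "\<alpha> * \<sigma> \<le> \<sigma> / 2"
    using assms by (simp add: mult_le_cancel_right)
  then have "cund * (w * Q) \<le> 5 / 4 * \<sigma>"
    using cell large by linarith
  then have "\<alpha> * cund / (4 * cbar) * w * (cbar * Q) \<le> \<alpha> / 4 * (5 / 4 * \<sigma>)"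
    using cbar \<open>0 < \<alpha>\<close> by (simp add: field_simps)
  also have "\<dots> \<le> \<alpha> * \<sigma> / 2"
    using \<open>0 < \<alpha>\<close> \<open>0 < \<sigma>\<close> by simp
  also have "\<dots> \<le> w' * (cbar * Q)"
    using slab' by (simp add: mult_ac)
  finally show ?thesis
    by (rule mult_right_le_imp_le) (use cbar \<open>0 < Q\<close> in simp)
qed

lemma slack_le_of_num_leaves:
  fixes l \<alpha> c cm M :: real
  assumes "1 \<le> l" "0 < \<alpha>" "\<alpha> < 1" "0 < c" "0 < cm" "0 \<le> M"
    and leaves: "l \<le> (\<alpha> / (2 * cm * M)) powr (1 / (c * ln (1 / \<alpha>)))"
    and k: "k < nat \<lceil>c * ln l\<rceil>"
  shows "cm * M \<le> \<alpha> * \<alpha> ^ k / 2"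
proof -
  define A where "A = \<alpha> / (2 * cm * M)"
  have ln_inv: "0 < ln (1 / \<alpha>)"
    using assms by simp
  have "M \<noteq> 0"
  proof
    assume "M = 0"
    then have "l \<le> 0"
      using leaves by simp
    with assms(1) show False
      by simp
  qed
  then have "0 < A"
    using assms by (simp add: A_def)
  have "ln l \<le> ln (A powr (1 / (c * ln (1 / \<alpha>))))"
    using leaves assms(1) \<open>0 < A\<close> by (subst ln_le_cancel_iff) (auto simp: A_def)
  also have "\<dots> = ln A / (c * ln (1 / \<alpha>))"
    by simp
  finally have lnA: "c * ln l * ln (1 / \<alpha>) \<le> ln A"
    using assms(4) ln_inv by (simp add: field_simps)
  have "int k < \<lceil>c * ln l\<rceil>"
    using k by (simp add: zless_nat_eq_int_zless)
  then have "real k \<le> c * ln l"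
    by (simp add: less_ceiling_iff)
  then have "ln ((1 / \<alpha>) ^ k) \<le> c * ln l * ln (1 / \<alpha>)"
    using ln_inv assms(2) by (simp add: ln_realpow mult_right_mono)
  also have "\<dots> \<le> ln A"
    by (fact lnA)
  finally have "(1 / \<alpha>) ^ k \<le> A"
    using \<open>0 < A\<close> assms(2) by simp
  moreover have "0 < 2 * cm * M" "0 < \<alpha> ^ k"
    using assms \<open>M \<noteq> 0\<close> by auto
  ultimately have "2 * cm * M \<le> \<alpha> * \<alpha> ^ k"
    by (simp add: A_def power_one_over divide_le_eq le_divide_eq mult.commute)
  then show ?thesis
    by simp
qed

lemma pow_div_le_powr:
  fixes \<delta> c b l :: real and L B :: nat
  assumes "0 < \<delta>" "\<delta> \<le> 1/2" "1 \<le> l" "0 \<le> c" "0 < B" "real B \<le> b"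
    and depth: "c * ln l \<le> real L"
  shows "(1 - \<delta>) ^ (L div B) \<le> 2 / l powr (c / b * \<delta>)"
proof -
  have "c * ln l / b \<le> real L / real B"
    using assms by (intro frac_le) auto
  also have "\<dots> < real (L div B) + 1"
    using real_of_int_floor_gt_diff_one[of "real L / real B"] by (simp add: floor_divide_of_nat_eq)
  finally have count: "c * ln l / b - 1 \<le> real (L div B)"
    by simp
  have "(1 - \<delta>) ^ (L div B) \<le> exp (- \<delta>) ^ (L div B)"
    using assms(1,2) exp_ge_add_one_self[of "- \<delta>"] by (intro power_mono) auto
  also have "\<dots> = exp (- \<delta> * real (L div B))"
    by (simp add: exp_of_nat_mult[symmetric] mult.commute)
  also have "\<dots> \<le> exp (- \<delta> * (c * ln l / b - 1))"
    using count assms(1) by simp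
  also have "\<dots> = exp \<delta> / l powr (c / b * \<delta>)"
    using assms(3) by (simp add: powr_def exp_diff algebra_simps)
  also have "\<dots> \<le> 2 / l powr (c / b * \<delta>)"
  proof -
    have "exp \<delta> \<le> exp (1/2)"
      using assms(2) by simp
    also have "\<dots> \<le> 2"
      by (rule exp_half_le2)
    finally show ?thesis
      by (simp add: divide_right_mono)
  qed
  finally show ?thesis .
qed

lemma lipschitz_on_diff_le_components:
  fixes f :: "real^'n \<Rightarrow> real"
  assumes "lipschitz_on L U f" "a \<in> U" "b \<in> U" "\<And>i. \<bar>a $ i - b $ i\<bar> \<le> r"
  shows "\<bar>f a - f b\<bar> \<le> L * sqrt CARD('n) * r"
proof -
  have "infnorm (a - b) \<le> r"
    unfolding infnorm_cart using assms(4) by (auto intro!: cSup_least)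
  then have "dist a b \<le> sqrt CARD('n) * r"
    using norm_le_infnorm[of "a - b"] by (simp add: dist_norm order_trans mult_left_mono)
  then have "L * dist a b \<le> L * (sqrt CARD('n) * r)"
    using lipschitz_on_nonneg[OF assms(1)] by (rule mult_left_mono)
  with lipschitz_onD[OF assms(1-3)] show ?thesis
    by (simp add: dist_real_def mult.assoc)
qed

lemma nat_floor_mult_bounds:
  fixes \<pi> :: real and P :: nat
  assumes "1 \<le> \<pi>"
  shows "P \<le> nat \<lfloor>\<pi> * P\<rfloor>" and "real (nat \<lfloor>\<pi> * P\<rfloor> + P) \<le> (\<pi> + 1) * P"
proof -
  have "real P \<le> \<pi> * P"
    using assms by (simp add: mult_le_cancel_right1)
  then show "P \<le> nat \<lfloor>\<pi> * P\<rfloor>"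
    by (rule le_nat_floor)
  have "real (nat \<lfloor>\<pi> * P\<rfloor>) \<le> \<pi> * P"
    using assms by (simp add: of_nat_floor)
  then show "real (nat \<lfloor>\<pi> * P\<rfloor> + P) \<le> (\<pi> + 1) * P"
    by (simp add: algebra_simps)
qed

(* The coverage condition with n T abstracted to nobs and the sampling error c_m M to slack. *)
locale coverage_setting =
  fixes X :: "obs \<Rightarrow> real^'p::finite" and Obs :: "obs set" and nobs :: nat
    and cund cbar slack \<alpha> :: real
  assumes card_Obs: "card Obs = nobs" and nobs_pos: "0 < nobs"
    and X_cube: "\<forall>w\<in>Obs. X w \<in> unit_cube"
    and coverage: "\<forall>x1\<in>unit_cube. \<forall>x2\<in>unit_cube. (\<forall>j. x1 $ j \<le> x2 $ j) \<longrightarrow>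
        (let V = (\<Prod>j\<in>UNIV. x2 $ j - x1 $ j);
             N = real (card {w\<in>Obs. \<forall>j. x1 $ j \<le> X w $ j \<and> X w $ j \<le> x2 $ j}) / real nobs
         in cund * V - slack \<le> N \<and> N \<le> cbar * V + slack)"
    and cund_pos: "0 < cund" and cund_le_cbar: "cund \<le> cbar"
    and alpha_pos: "0 < \<alpha>" and alpha_less_half: "\<alpha> < 1/2"
begin

lemma finite_Obs: "finite Obs"
  using card_Obs nobs_pos card_ge_0_finite by auto

definition box_obs :: "('p \<Rightarrow> real) \<Rightarrow> ('p \<Rightarrow> real) \<Rightarrow> obs set" where
  "box_obs lo hi = {w\<in>Obs. \<forall>i. lo i \<le> X w $ i \<and> X w $ i \<le> hi i}"

lemma coverage_box:
  assumes "\<And>i. 0 \<le> lo i" "\<And>i. lo i \<le> hi i" "\<And>i. hi i \<le> 1"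
  shows "cund * (\<Prod>i\<in>UNIV. hi i - lo i) - slack \<le> card (box_obs lo hi) / nobs"
    and "card (box_obs lo hi) / nobs \<le> cbar * (\<Prod>i\<in>UNIV. hi i - lo i) + slack"
proof -
  have "(\<chi> i. lo i) \<in> unit_cube" "(\<chi> i. hi i) \<in> unit_cube"
    using assms by (auto simp: unit_cube_def intro: order.trans)
  from coverage[rule_format, OF this] assms
  show "cund * (\<Prod>i\<in>UNIV. hi i - lo i) - slack \<le> card (box_obs lo hi) / nobs"
    and "card (box_obs lo hi) / nobs \<le> cbar * (\<Prod>i\<in>UNIV. hi i - lo i) + slack"
    by (simp_all add: box_obs_def Let_def)
qed

(* Tree nodes are box-closed, so the coverage lower bound applies to their bounding box. *)
definition box_closed :: "obs set \<Rightarrow> bool" where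
  "box_closed S \<longleftrightarrow> box_obs (box_lo X S) (box_hi X S) \<subseteq> S"

lemma box_obs_eq:
  assumes "S \<subseteq> Obs" "box_closed S"
  shows "box_obs (box_lo X S) (box_hi X S) = S"
  using assms finite_subset[OF assms(1) finite_Obs] box_lo_le box_hi_ge
  by (auto simp: box_closed_def box_obs_def)

lemma box_bounds:
  assumes "S \<subseteq> Obs" "S \<noteq> {}"
  shows "0 \<le> box_lo X S i" "box_lo X S i \<le> box_hi X S i" "box_hi X S i \<le> 1"
proof -
  have fin: "finite S"
    using assms(1) finite_Obs finite_subset by blast
  obtain a where a: "a \<in> S" "box_lo X S i = X a $ i"
    using box_lo_attained[OF fin assms(2)] by blast
  obtain b where b: "b \<in> S" "box_hi X S i = X b $ i"
    using box_hi_attained[OF fin assms(2)] by blast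
  have "X a \<in> unit_cube" "X b \<in> unit_cube"
    using a b assms(1) X_cube by auto
  then show "0 \<le> box_lo X S i" "box_hi X S i \<le> 1"
    using a b by (auto simp: unit_cube_def)
  show "box_lo X S i \<le> box_hi X S i"
    using box_lo_le[OF fin a(1)] box_hi_ge[OF fin a(1)] by (rule order.trans)
qed

definition shrink_rate :: real where
  "shrink_rate = \<alpha> * cund / (4 * cbar)"

lemma shrink_rate_pos: "0 < shrink_rate"
  using alpha_pos cund_pos cund_le_cbar by (simp add: shrink_rate_def)

lemma shrink_rate_le_half: "shrink_rate \<le> 1/2"
proof -
  have "\<alpha> * cund \<le> 1/2 * cbar"
    using alpha_pos alpha_less_half cund_pos cund_le_cbar
    by (intro mult_mono) auto
  then show ?thesis
    using cund_pos cund_le_cbar by (simp add: shrink_rate_def divide_le_eq)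
qed

lemma slab_width_ge:
  assumes S: "S \<subseteq> Obs" "S \<noteq> {}" "box_closed S"
    and slab: "box_lo X S j \<le> u" "u \<le> v" "v \<le> box_hi X S j"
    and A: "A \<subseteq> S" "\<forall>w\<in>A. u \<le> X w $ j \<and> X w $ j \<le> v" "\<alpha> * card S \<le> card A"
    and large: "slack \<le> \<alpha> * (card S / nobs) / 2"
  shows "shrink_rate * box_width X S j \<le> v - u"
proof -
  let ?lo = "box_lo X S" and ?hi = "box_hi X S"
  define Q where "Q = (\<Prod>i\<in>UNIV - {j}. ?hi i - ?lo i)"
  define \<sigma> where "\<sigma> = card S / nobs"
  have bounds: "\<And>i. 0 \<le> ?lo i" "\<And>i. ?lo i \<le> ?hi i" "\<And>i. ?hi i \<le> 1"
    using box_bounds[OF S(1,2)] by auto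
  have slab_bounds: "\<And>i. 0 \<le> (?lo(j := u)) i" "\<And>i. (?lo(j := u)) i \<le> (?hi(j := v)) i"
      "\<And>i. (?hi(j := v)) i \<le> 1"
    using bounds slab by (auto intro: order.trans)
  have vol_slab: "(\<Prod>i\<in>UNIV. (?hi(j := v)) i - (?lo(j := u)) i) = (v - u) * Q"
  proof -
    have "(\<Prod>i\<in>UNIV - {j}. (?hi(j := v)) i - (?lo(j := u)) i) = Q"
      unfolding Q_def by (rule prod.cong) auto
    then show ?thesis
      by (subst prod.remove[of UNIV j]) simp_all
  qed
  have vol_cell: "(\<Prod>i\<in>UNIV. ?hi i - ?lo i) = box_width X S j * Q"
    unfolding Q_def box_width_def by (subst prod.remove[of UNIV j]) simp_all
  have "finite S"
    using S(1) finite_Obs finite_subset by blast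
  have "A \<subseteq> box_obs (?lo(j := u)) (?hi(j := v))"
    using A S(1) box_lo_le[OF \<open>finite S\<close>] box_hi_ge[OF \<open>finite S\<close>]
    by (fastforce simp: box_obs_def)
  then have "card A \<le> card (box_obs (?lo(j := u)) (?hi(j := v)))"
    by (intro card_mono) (auto simp: box_obs_def finite_Obs)
  then have "\<alpha> * \<sigma> \<le> card (box_obs (?lo(j := u)) (?hi(j := v))) / nobs"
    using A(3) nobs_pos by (simp add: \<sigma>_def divide_right_mono)
  also have "\<dots> \<le> cbar * ((v - u) * Q) + slack"
    using coverage_box(2)[of "?lo(j := u)" "?hi(j := v)", OF slab_bounds] vol_slab by simp
  finally have slab_cover: "\<alpha> * \<sigma> \<le> cbar * ((v - u) * Q) + slack" .
  have cell_cover: "cund * (box_width X S j * Q) - slack \<le> \<sigma>"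
    using coverage_box(1)[of ?lo ?hi, OF bounds] box_obs_eq[OF S(1,3)] vol_cell
    by (simp add: \<sigma>_def)
  have "0 < \<sigma>"
    using \<open>finite S\<close> S(2) nobs_pos by (simp add: \<sigma>_def card_gt_0_iff)
  moreover have "0 \<le> Q"
    using bounds by (simp add: Q_def prod_nonneg)
  ultimately show ?thesis
    using slab_volume_ratio[OF alpha_pos _ cund_pos cund_le_cbar _ _ _ slab_cover cell_cover]
      alpha_less_half large by (simp add: shrink_rate_def \<sigma>_def)
qed

lemma box_closed_subset:
  assumes S: "S \<subseteq> Obs" "box_closed S" and A: "A \<subseteq> S" "A \<noteq> {}"
    and slab: "\<And>w. w \<in> S \<Longrightarrow> box_lo X A j \<le> X w $ j \<Longrightarrow> X w $ j \<le> box_hi X A j \<Longrightarrow> w \<in> A"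
  shows "box_closed A"
  unfolding box_closed_def
proof
  fix w assume w: "w \<in> box_obs (box_lo X A) (box_hi X A)"
  have "finite S"
    using S(1) finite_Obs finite_subset by blast
  then have "w \<in> box_obs (box_lo X S) (box_hi X S)"
    using w A box_lo_antimono[of S A X] box_hi_mono[of S A X]
    by (fastforce simp: box_obs_def intro: order.trans)
  then have "w \<in> S"
    using S(2) by (auto simp: box_closed_def)
  then show "w \<in> A"
    using w slab by (simp add: box_obs_def)
qed

lemma split_child_nonempty:
  assumes "finite S" "S \<noteq> {}" "\<alpha> * card S \<le> card A"
  shows "A \<noteq> {}"
proof -
  have "0 < \<alpha> * card S"
    using assms(1,2) alpha_pos by (simp add: card_gt_0_iff)
  then show ?thesis
    using assms(3) by auto
qed

lemma split_children_separated:
  assumes "S \<subseteq> Obs" "S \<noteq> {}"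
    and "\<alpha> * card S \<le> card {w\<in>S. X w $ j \<le> x}" and "\<alpha> * card S \<le> card {w\<in>S. X w $ j > x}"
  shows "{w\<in>S. X w $ j \<le> x} \<noteq> {}" "{w\<in>S. X w $ j > x} \<noteq> {}"
    and "box_hi X {w\<in>S. X w $ j \<le> x} j \<le> x" "x < box_lo X {w\<in>S. X w $ j > x} j"
proof -
  have "finite S"
    using assms(1) finite_Obs finite_subset by blast
  then show ne: "{w\<in>S. X w $ j \<le> x} \<noteq> {}" "{w\<in>S. X w $ j > x} \<noteq> {}"
    using split_child_nonempty[OF _ assms(2) assms(3)] split_child_nonempty[OF _ assms(2) assms(4)]
    by auto
  show "box_hi X {w\<in>S. X w $ j \<le> x} j \<le> x"
    using box_hi_attained[OF _ ne(1), of X j] \<open>finite S\<close> by auto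
  show "x < box_lo X {w\<in>S. X w $ j > x} j"
    using box_lo_attained[OF _ ne(2), of X j] \<open>finite S\<close> by auto
qed

lemma split_children_closed:
  fixes S :: "obs set" and j x
  defines "SL \<equiv> {w\<in>S. X w $ j \<le> x}" and "SR \<equiv> {w\<in>S. X w $ j > x}"
  assumes S: "S \<subseteq> Obs" "S \<noteq> {}" "box_closed S"
    and L: "\<alpha> * card S \<le> card SL" and R: "\<alpha> * card S \<le> card SR"
  shows "box_closed SL" "box_closed SR"
proof -
  note sep = split_children_separated[OF S(1,2) L[unfolded SL_def] R[unfolded SR_def],
      folded SL_def SR_def]
  show "box_closed SL"
    using box_closed_subset[OF S(1,3) _ sep(1), of j] sep(3) by (auto simp: SL_def)
  show "box_closed SR"
    using box_closed_subset[OF S(1,3) _ sep(2), of j] sep(4) by (auto simp: SR_def)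
qed

lemma split_children_shrink:
  fixes S :: "obs set" and j x
  defines "SL \<equiv> {w\<in>S. X w $ j \<le> x}" and "SR \<equiv> {w\<in>S. X w $ j > x}"
  assumes S: "S \<subseteq> Obs" "S \<noteq> {}" "box_closed S"
    and L: "\<alpha> * card S \<le> card SL" and R: "\<alpha> * card S \<le> card SR"
    and large: "slack \<le> \<alpha> * (card S / nobs) / 2"
  shows "box_width X SL j \<le> (1 - shrink_rate) * box_width X S j"
    and "box_width X SR j \<le> (1 - shrink_rate) * box_width X S j"
proof -
  note sep = split_children_separated[OF S(1,2) L[unfolded SL_def] R[unfolded SR_def],
      folded SL_def SR_def]
  have "finite S"
    using S(1) finite_Obs finite_subset by blast
  then have fin: "finite S" "finite SL" "finite SR"
    by (simp_all add: SL_def SR_def)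
  have sub: "SL \<subseteq> S" "SR \<subseteq> S"
    by (auto simp: SL_def SR_def)
  have loL: "box_lo X S j \<le> box_lo X SL j" and hiL: "box_hi X SL j \<le> box_hi X S j"
    and loR: "box_lo X S j \<le> box_lo X SR j" and hiR: "box_hi X SR j \<le> box_hi X S j"
    using box_lo_antimono[OF fin(1) sub(1) sep(1)] box_hi_mono[OF fin(1) sub(1) sep(1)]
      box_lo_antimono[OF fin(1) sub(2) sep(2)] box_hi_mono[OF fin(1) sub(2) sep(2)] by auto
  have ordered: "box_lo X SL j \<le> box_hi X SL j" "box_lo X SR j \<le> box_hi X SR j"
    using box_bounds(2) S(1) sub sep(1,2) by blast+
  have inL: "\<forall>w\<in>SL. box_lo X S j \<le> X w $ j \<and> X w $ j \<le> box_hi X SL j"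
    using sub(1) box_lo_le[OF fin(1)] box_hi_ge[OF fin(2)] by blast
  have inR: "\<forall>w\<in>SR. box_lo X SR j \<le> X w $ j \<and> X w $ j \<le> box_hi X S j"
    using sub(2) box_lo_le[OF fin(3)] box_hi_ge[OF fin(1)] by blast
  have gapL: "shrink_rate * box_width X S j \<le> box_hi X SL j - box_lo X S j"
    using loL ordered(1) by (intro slab_width_ge[OF S order.refl _ hiL sub(1) inL L large]) simp
  have gapR: "shrink_rate * box_width X S j \<le> box_hi X S j - box_lo X SR j"
    using ordered(2) hiR by (intro slab_width_ge[OF S loR _ order.refl sub(2) inR R large]) simp
  show "box_width X SL j \<le> (1 - shrink_rate) * box_width X S j"
    using gapR loL sep(3,4) by (simp add: box_width_def algebra_simps)
  show "box_width X SR j \<le> (1 - shrink_rate) * box_width X S j"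
    using gapL hiR sep(3,4) by (simp add: box_width_def algebra_simps)
qed

(* h lists the split covariates of the ancestors, most recent first, so drop (length h - K) h
   are those used at depths below K: only there are the nodes large enough for the coverage
   condition to force shrinking. *)
definition good_cell :: "nat \<Rightarrow> obs set \<Rightarrow> 'p list \<Rightarrow> bool" where
  "good_cell K S h \<longleftrightarrow> S \<subseteq> Obs \<and> S \<noteq> {} \<and> box_closed S \<and> \<alpha> ^ length h * nobs \<le> card S \<and>
     (\<forall>i. box_width X S i \<le> (1 - shrink_rate) ^ count_list (drop (length h - K) h) i)"

lemma good_cell_root: "good_cell K Obs []"
proof -
  have "Obs \<noteq> {}"
    using card_Obs nobs_pos by auto
  moreover have "box_width X Obs i \<le> 1" for i
    using box_bounds[OF order.refl \<open>Obs \<noteq> {}\<close>, of i] by (simp add: box_width_def)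
  ultimately show ?thesis
    by (auto simp: good_cell_def box_closed_def box_obs_def card_Obs)
qed

lemma good_cell_child:
  assumes S: "good_cell K S h"
    and A: "A \<subseteq> S" "A \<noteq> {}" "box_closed A" "\<alpha> * card S \<le> card A"
    and shrink: "length h < K \<Longrightarrow> box_width X A j \<le> (1 - shrink_rate) * box_width X S j"
  shows "good_cell K A (j # h)"
proof -
  have "finite S"
    using S finite_Obs finite_subset by (auto simp: good_cell_def)
  have "\<alpha> ^ length (j # h) * nobs = \<alpha> * (\<alpha> ^ length h * nobs)"
    by simp
  also have "\<dots> \<le> \<alpha> * card S"
    using S alpha_pos by (simp add: good_cell_def)
  finally have size: "\<alpha> ^ length (j # h) * nobs \<le> card A"
    using A(4) by linarith
  have rate: "0 \<le> 1 - shrink_rate"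
    using shrink_rate_le_half by simp
  have width: "box_width X A i \<le> (1 - shrink_rate) ^ count_list (drop (length (j # h) - K) (j # h)) i"
    for i
  proof (cases "length h < K \<and> i = j")
    case True
    then have "box_width X A i \<le> (1 - shrink_rate) * box_width X S j"
      using shrink by simp
    also have "\<dots> \<le> (1 - shrink_rate) * (1 - shrink_rate) ^ count_list (drop (length h - K) h) j"
      using S rate by (intro mult_left_mono) (auto simp: good_cell_def)
    finally show ?thesis
      using True by simp
  next
    case False
    have "box_width X A i \<le> box_width X S i"
      using box_width_mono[OF \<open>finite S\<close> A(1,2)] .
    also have "\<dots> \<le> (1 - shrink_rate) ^ count_list (drop (length h - K) h) i"
      using S by (simp add: good_cell_def)
    finally show ?thesis
      using False by (cases "length h < K") (auto simp: Suc_diff_le)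
  qed
  show ?thesis
    using S A size width by (auto simp: good_cell_def)
qed

lemma good_cell_split:
  assumes large: "\<forall>k<K. slack \<le> \<alpha> * \<alpha> ^ k / 2"
    and S: "good_cell K S h"
    and L: "\<alpha> * card S \<le> card {w\<in>S. X w $ j \<le> x}"
    and R: "\<alpha> * card S \<le> card {w\<in>S. X w $ j > x}"
  shows "good_cell K {w\<in>S. X w $ j \<le> x} (j # h) \<and> good_cell K {w\<in>S. X w $ j > x} (j # h)"
proof -
  have S': "S \<subseteq> Obs" "S \<noteq> {}" "box_closed S"
    using S by (auto simp: good_cell_def)
  have "finite S"
    using S'(1) finite_Obs finite_subset by blast
  have "slack \<le> \<alpha> * (card S / nobs) / 2" if "length h < K"
  proof -
    have "slack \<le> \<alpha> * \<alpha> ^ length h / 2"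
      using large that by blast
    also have "\<dots> \<le> \<alpha> * (card S / nobs) / 2"
      using S alpha_pos nobs_pos by (simp add: good_cell_def field_simps)
    finally show ?thesis .
  qed
  then show ?thesis
    using good_cell_child[OF S] split_children_closed[OF S' L R] split_children_shrink[OF S' L R]
      split_child_nonempty[OF \<open>finite S\<close> S'(2) L] split_child_nonempty[OF \<open>finite S\<close> S'(2) R] L R
    by auto
qed

lemma leaf_good_cell:
  assumes "alpha_regular X W q \<alpha> tr Obs" "fair_split_aux m tr []"
    and "\<forall>k<K. slack \<le> \<alpha> * \<alpha> ^ k / 2"
    and "(C, d) \<in> leaf_clusters X tr Obs 0"
  shows "\<exists>h. length h = d \<and> good_cell K C h \<and> fair_history m h"
  using leaf_clusters_invariant[where Inv = "good_cell K", OF assms(2,1) good_cell_root]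
    good_cell_split[OF assms(3)] assms(4)
  by simp

lemma good_cell_width:
  fixes h :: "'p list"
  assumes "good_cell K C h" "fair_history m h" "CARD('p) \<le> m"
  shows "box_width X C j \<le> (1 - shrink_rate) ^ (min (length h) K div (m + CARD('p)))"
proof -
  have "length (drop (length h - K) h) = min (length h) K"
    by (simp add: min_def)
  then have "min (length h) K div (m + CARD('p)) \<le> count_list (drop (length h - K) h) j"
    using fair_history_count[OF fair_history_drop[OF assms(2)] assms(3), of "length h - K" j]
    by simp
  then have "(1 - shrink_rate) ^ count_list (drop (length h - K) h) j
      \<le> (1 - shrink_rate) ^ (min (length h) K div (m + CARD('p)))"
    using shrink_rate_pos shrink_rate_le_half by (intro power_decreasing) auto
  with assms(1) show ?thesis
    by (auto simp: good_cell_def intro: order.trans)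
qed

lemma leaf_box_width:
  fixes \<pi> c :: real
  assumes "alpha_regular X W q \<alpha> tr Obs" "fair_split \<pi> tr" "1 < \<pi>" "0 < c"
    and large: "\<forall>k < nat \<lceil>c * ln (num_leaves tr)\<rceil>. slack \<le> \<alpha> * \<alpha> ^ k / 2"
    and leaf: "(C, d) \<in> leaf_clusters X tr Obs 0" and depth: "c * ln (num_leaves tr) \<le> d"
  shows "box_width X C j \<le> 2 / num_leaves tr powr (c / ((\<pi> + 1) * CARD('p)) * shrink_rate)"
proof -
  let ?P = "CARD('p)"
  define m where "m = nat \<lfloor>\<pi> * ?P\<rfloor>"
  define K where "K = nat \<lceil>c * ln (num_leaves tr)\<rceil>"
  have m: "?P \<le> m" "real (m + ?P) \<le> (\<pi> + 1) * ?P"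
    unfolding m_def using nat_floor_mult_bounds[of \<pi> ?P] \<open>1 < \<pi>\<close> by simp_all
  obtain h where h: "length h = d" "good_cell K C h" "fair_history m h"
    using leaf_good_cell[OF assms(1) _ large[folded K_def] leaf] assms(2)
    by (auto simp: fair_split_def m_def)
  have leaves: "1 \<le> real (num_leaves tr)"
    using num_leaves_pos by simp
  then have "c * ln (num_leaves tr) \<le> real K"
    using \<open>0 < c\<close> by (simp add: K_def)
  with depth have "c * ln (num_leaves tr) \<le> real (min d K)"
    by (simp add: min_def)
  have "box_width X C j \<le> (1 - shrink_rate) ^ (min d K div (m + ?P))"
    using good_cell_width[OF h(2,3) m(1)] by (simp add: h(1))
  also have "\<dots> \<le> 2 / num_leaves tr powr (c / ((\<pi> + 1) * ?P) * shrink_rate)"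
    using pow_div_le_powr[OF shrink_rate_pos shrink_rate_le_half leaves _ _ m(2)]
      \<open>0 < c\<close> \<open>c * ln (num_leaves tr) \<le> real (min d K)\<close> by simp
  finally show ?thesis .
qed


lemma lipschitz_diff_le_box_width:
  assumes "lipschitz_on L unit_cube f" "C \<subseteq> Obs" "a \<in> C" "b \<in> C" "\<And>j. box_width X C j \<le> r"
  shows "\<bar>f (X a) - f (X b)\<bar> \<le> L * sqrt CARD('p) * r"
proof (rule lipschitz_on_diff_le_components[OF assms(1)])
  show "X a \<in> unit_cube" "X b \<in> unit_cube"
    using assms(2-4) X_cube by auto
  have "finite C"
    using assms(2) finite_Obs finite_subset by blast
  show "\<bar>X a $ j - X b $ j\<bar> \<le> r" for j
    using component_dist_le_box_width[OF \<open>finite C\<close> assms(3,4), of X j] assms(5)[of j]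
    by (rule order_trans)
qed

end

theorem theorem1:
  fixes n T q :: nat
    and \<alpha> \<pi> c cbar cund cm :: real
    and X :: "obs \<Rightarrow> real^'p::finite"
    and W :: "nat \<Rightarrow> obs \<Rightarrow> bool"
    and tr :: "'p rtree"
    and Tstar :: "nat \<Rightarrow> real^'p \<Rightarrow> real"
    and L :: "nat \<Rightarrow> real"
  defines "M \<equiv> sqrt (ln (real (n * T)) * (real CARD('p) + 1) / real (min n T))"
      and "Obs \<equiv> {(z, t). z < n \<and> t < T}"
      and "nleaves \<equiv> num_leaves tr"
      and "s \<equiv> c / ((\<pi> + 1) * real CARD('p)) * (\<alpha> * cund / (4 * cbar))"
  assumes "n \<ge> 1" and "T \<ge> 1"
    and "0 < \<alpha>" and "\<alpha> < 1/2" and "\<pi> > 1" and "c > 0"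
    and "cund > 0" and "cbar \<ge> cund" and "cm > 0"
    and X_cube: "\<forall>w\<in>Obs. X w \<in> unit_cube"
    and coverage: "\<forall>x1\<in>unit_cube. \<forall>x2\<in>unit_cube. (\<forall>j. x1 $ j \<le> x2 $ j) \<longrightarrow>
        (let V = (\<Prod>j\<in>UNIV. x2 $ j - x1 $ j);
             N = real (card {w\<in>Obs. \<forall>j. x1 $ j \<le> X w $ j \<and> X w $ j \<le> x2 $ j}) / real (n * T)
         in cund * V - cm * M \<le> N \<and> N \<le> cbar * V + cm * M)"
    and "alpha_regular X W q \<alpha> tr Obs"
    and "fair_split \<pi> tr"
    and depth: "\<forall>(C, d)\<in>leaf_clusters X tr Obs 0. real d \<ge> c * ln (real nleaves)"
    and leaves: "real nleaves \<le> (\<alpha> / (2 * cm * M)) powr (1 / (c * ln (1 / \<alpha>)))"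
    and lip: "\<forall>i<q. lipschitz_on (L i) unit_cube (Tstar i)"
  shows "\<forall>i<q. \<forall>(C, d)\<in>leaf_clusters X tr Obs 0. \<forall>a\<in>C. \<forall>b\<in>C.
           \<bar>Tstar i (X a) - Tstar i (X b)\<bar> \<le> 2 * L i * sqrt (real CARD('p)) / real nleaves powr s"
proof -
  have card_Obs: "card Obs = n * T"
    by (simp add: Obs_def card_cartesian_product[of "{..<n}" "{..<T}", symmetric] lessThan_def)
  interpret coverage_setting X Obs "n * T" cund cbar "cm * M" \<alpha>
    using card_Obs X_cube coverage \<open>n \<ge> 1\<close> \<open>T \<ge> 1\<close> \<open>cund > 0\<close> \<open>cbar \<ge> cund\<close>
      \<open>0 < \<alpha>\<close> \<open>\<alpha> < 1/2\<close>
    by unfold_locales auto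
  have "0 \<le> ln (real (n * T))"
    using \<open>n \<ge> 1\<close> \<open>T \<ge> 1\<close> by (intro ln_ge_zero) (simp del: of_nat_mult add: Suc_le_eq)
  then have "0 \<le> M"
    unfolding M_def by (intro real_sqrt_ge_zero divide_nonneg_nonneg mult_nonneg_nonneg) auto
  then have large: "\<forall>k < nat \<lceil>c * ln (num_leaves tr)\<rceil>. cm * M \<le> \<alpha> * \<alpha> ^ k / 2"
    using slack_le_of_num_leaves[of nleaves \<alpha> c cm M] num_leaves_pos[of tr] leaves
      \<open>0 < \<alpha>\<close> \<open>\<alpha> < 1/2\<close> \<open>c > 0\<close> \<open>cm > 0\<close>
    by (simp add: nleaves_def)
  have "\<bar>Tstar i (X a) - Tstar i (X b)\<bar> \<le> 2 * L i * sqrt CARD('p) / real nleaves powr s"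
    if "i < q" and leaf: "(C, d) \<in> leaf_clusters X tr Obs 0" and "a \<in> C" "b \<in> C"
    for i C d a b
  proof -
    have "c * ln (num_leaves tr) \<le> d"
      using depth leaf by (auto simp: nleaves_def)
    then have "box_width X C j \<le> 2 / real nleaves powr s" for j
      using leaf_box_width[OF \<open>alpha_regular X W q \<alpha> tr Obs\<close> \<open>fair_split \<pi> tr\<close> \<open>\<pi> > 1\<close>
          \<open>c > 0\<close> large leaf]
      by (simp add: s_def shrink_rate_def nleaves_def)
    then have "\<bar>Tstar i (X a) - Tstar i (X b)\<bar> \<le> L i * sqrt CARD('p) * (2 / real nleaves powr s)"
      using lipschitz_diff_le_box_width lip \<open>i < q\<close> leaf_clusters_subset[OF leaf] \<open>a \<in> C\<close> \<open>b \<in> C\<close>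
      by blast
    then show ?thesis
      by (simp add: mult_ac)
  qed
  then show ?thesis
    by fast
qed

end
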